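(* Let $q$ be a prime power, $r$ a prime with $r\mid(q-1)$ and $r\ge3$, $q/2\le\ell\le q-1$, and $s\mid(q-1)/r$. Assume that every nonzero $f\in\mathbb{F}_q[X]$ of degree $<r$ satisfies $|f|+|\{x\in\Omega_r: f(x)\neq0\}|\geq r+1$, where $|f|$ is the number of nonzero coefficients of $f$ and $\Omega_r=\{x\in\mathbb{F}_q^*:x^r=1\}$. If $s\geq 2r^2$, then the folded quantum Tamo–Barg code with parameters $q,r,\ell,s$ has distance at least \[ \frac{q-1}{s}\left(1-\frac{\ell-1}{q-1}-\left(1+\frac{r^2}{s}\right)\sqrt{\frac{1}{r}\left(1-\frac{\ell-1}{q-1}\right)}\right). \]
   Context: $[n]=\{0,\dots,n-1\}$, $\mathbb{F}_q^*=\mathbb{F}_q\setminus\{0\}$. For $S\subseteq\mathbb{Z}_{\ge0}$, $\mathbb{F}_q[X]^S=\{\sum_{i\in S}a_iX^i\}$, $\mathrm{ev}(f)=(f(x))_{x\in\mathbb{F}_q^*}$. Let $S=\{i\in[\ell]:i\not\equiv r-1\pmod r\}\cup\{i\in[q-1]:i\equiv1\pmod r\}$, $C=\mathrm{ev}(\mathbb{F}_q[X]^S)$; for $\ell\ge q/2$, $C^\perp\subseteq C$ and the quantum Tamo–Barg code is $\mathrm{CSS}(C,C)$, qudits indexed by $\mathbb{F}_q^*$. Folding: fix a generator $\omega$ of $\mathbb{F}_q^*$ and for $i\in[(q-1)/s]$ group the $s$ positions $\{\omega^{si},\dots,\omega^{si+s-1}\}$ into one symbol of alphabet $\mathbb{F}_q^s$,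 giving the folded quantum Tamo–Barg code of block length $(q-1)/s$. Its distance is the minimum, over $c\in C\setminus C^\perp$, of the number of blocks on which $c$ is not identically zero. *)

theory Defs
  imports "HOL-Computational_Algebra.Polynomial" Complex_Main
begin

text \<open>Vectors indexed by F_q^* are represented as functions 'a => 'a that vanish at 0.\<close>

definition tb_index_set :: "nat \<Rightarrow> nat \<Rightarrow> nat \<Rightarrow> nat set" where
  "tb_index_set q r l = {i. i < l \<and> i mod r \<noteq> (r - 1) mod r} \<union> {i. i < q - 1 \<and> i mod r = 1 mod r}"

definition ev :: "'a::field poly \<Rightarrow> 'a \<Rightarrow> 'a" where
  "ev f = (\<lambda>x. if x = 0 then 0 else poly f x)"

definition tb_code :: "nat \<Rightarrow> nat \<Rightarrow> ('a::{finite,field} \<Rightarrow> 'a) set" where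
  "tb_code r l = {ev f | f. \<forall>i. coeff f i \<noteq> 0 \<longrightarrow> i \<in> tb_index_set (card (UNIV :: 'a set)) r l}"

definition dual_code :: "('a::{finite,field} \<Rightarrow> 'a) set \<Rightarrow> ('a \<Rightarrow> 'a) set" where
  "dual_code C = {d. d 0 = 0 \<and> (\<forall>c\<in>C. (\<Sum>x\<in>UNIV - {0}. c x * d x) = 0)}"

definition folded_weight :: "'a::{finite,field} \<Rightarrow> nat \<Rightarrow> ('a \<Rightarrow> 'a) \<Rightarrow> nat" where
  "folded_weight \<omega> s c = card {i. i < (card (UNIV :: 'a set) - 1) div s \<and> (\<exists>j<s. c (\<omega> ^ (s * i + j)) \<noteq> 0)}"

definition is_generator :: "'a::field \<Rightarrow> bool" where
  "is_generator \<omega> \<longleftrightarrow> \<omega> \<noteq> 0 \<and> (\<forall>x. x \<noteq> 0 \<longrightarrow> (\<exists>k::nat. x = \<omega> ^ k))"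

definition poly_sparsity :: "'a::zero poly \<Rightarrow> nat" where
  "poly_sparsity f = card {i. coeff f i \<noteq> 0}"

end

theory Submission
  imports Defs "HOL-Library.Cardinality" "Jordan_Normal_Form.Determinant"
begin

(* Split f into its residue parts f_a (the monomials with exponent congruent to a mod r). For the
   primitive r-th root of unity zeta one has f (zeta^t x) = sum_a zeta^(t a) f_a(x), and
   multiplication by zeta permutes the blocks of the folding. If block b vanishes together with m - 1
   of its translates by powers of zeta, the hypothesis on sparse polynomials, an uncertainty principle
   for the Fourier transform on the r-th roots of unity, turns these m zero blocks into m - 1
   independent linear relations among the parts f_a, a <> 1, on block b (if all r translates vanish,
   so do all parts). Such relations make each point of the block a root of multiplicity at least
   m - 1 of W(X) = det (f_(a_i) (omega^j X)), a Wronskian with dilations in place of derivatives.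
   W is nonzero, as its coefficient of degree sum_i deg f_(a_i) is a Vandermonde determinant, and
   deg W <= (l - 1) w, so counting the roots of W bounds the number of zero blocks. Codewords outside
   the dual code have a nonzero part f_a with a <> 1, while f_1, whose degree is not bounded by l,
   is eliminated from the relations. *)

section \<open>Finite fields\<close>

lemma one_less_card_field: "1 < CARD('a::{finite,field})"
proof -
  have "card {0::'a, 1} \<le> CARD('a)"
    by (rule card_mono) auto
  then show ?thesis by simp
qed

lemma finite_field_pow_card_minus_one:
  fixes x :: "'a::{finite,field}"
  assumes "x \<noteq> 0"
  shows "x ^ (CARD('a) - 1) = 1"
proof -
  have "(\<Prod>y\<in>UNIV - {0}. x * y) = (\<Prod>y\<in>UNIV - {0::'a}. y)"
    by (rule prod.reindex_bij_witness[of _ "\<lambda>y. y / x" "\<lambda>y. x * y"]) (use assms in auto)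
  moreover have "(\<Prod>y\<in>UNIV - {0}. x * y) = x ^ card (UNIV - {0::'a}) * (\<Prod>y\<in>UNIV - {0}. y)"
    by (simp add: prod.distrib)
  moreover have "card (UNIV - {0::'a}) = CARD('a) - 1"
    by (simp add: card_Diff_subset)
  moreover have "(\<Prod>y\<in>UNIV - {0::'a}. y) \<noteq> 0"
    by simp
  ultimately show ?thesis
    by (metis mult_cancel_right2)
qed

lemma sum_nonzero_powers_eq_0:
  fixes y :: "'a::{finite,field}"
  assumes "y \<noteq> 0" and "y ^ k \<noteq> 1"
  shows "(\<Sum>x\<in>UNIV - {0::'a}. x ^ k) = 0"
proof -
  let ?S = "\<Sum>x\<in>UNIV - {0}. x ^ k"
  have "?S = (\<Sum>x\<in>UNIV - {0}. (y * x) ^ k)"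
    by (rule sum.reindex_bij_witness[of _ "\<lambda>x. y * x" "\<lambda>x. x / y"]) (use assms in auto)
  also have "\<dots> = y ^ k * ?S"
    by (simp add: power_mult_distrib sum_distrib_left)
  finally have "(y ^ k - 1) * ?S = 0"
    by (simp add: left_diff_distrib)
  then show ?thesis
    using assms(2) by simp
qed

lemma sum_nonzero_poly_mult_eq_0:
  fixes f g :: "'a::{finite,field} poly"
  assumes "\<And>i j. coeff g i \<noteq> 0 \<Longrightarrow> coeff f j \<noteq> 0 \<Longrightarrow> (\<Sum>x\<in>UNIV - {0::'a}. x ^ (i + j)) = 0"
  shows "(\<Sum>x\<in>UNIV - {0}. poly g x * poly f x) = 0"
proof -
  let ?T = "\<lambda>i j x. coeff g i * coeff f j * x ^ (i + j)"
  have "(\<Sum>x\<in>UNIV - {0}. poly g x * poly f x) = (\<Sum>x\<in>UNIV - {0}. \<Sum>i\<le>degree g. \<Sum>j\<le>degree f. ?T i j x)"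
    unfolding poly_altdef sum_product by (simp add: power_add mult_ac)
  also have "\<dots> = (\<Sum>i\<le>degree g. \<Sum>j\<le>degree f. \<Sum>x\<in>UNIV - {0}. ?T i j x)"
    by (subst sum.swap) (simp only: sum.swap[of _ "UNIV - {0}"])
  also have "\<dots> = 0"
  proof (rule sum.neutral, rule ballI, rule sum.neutral, rule ballI)
    fix i j
    show "(\<Sum>x\<in>UNIV - {0}. ?T i j x) = 0"
      using assms[of i j] by (cases "coeff g i = 0 \<or> coeff f j = 0") (auto simp: sum_distrib_left[symmetric])
  qed
  finally show ?thesis .
qed

context
  fixes \<omega> :: "'a::{finite,field}"
  assumes gen: "is_generator \<omega>"
begin

lemma generator_nonzero: "\<omega> \<noteq> 0"
  using gen by (simp add: is_generator_def)

lemma generator_pow_mod: "\<omega> ^ (k mod (CARD('a) - 1)) = \<omega> ^ k"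
proof -
  have "\<omega> ^ k = \<omega> ^ ((CARD('a) - 1) * (k div (CARD('a) - 1)) + k mod (CARD('a) - 1))"
    by (simp only: mult_div_mod_eq)
  also have "\<dots> = (\<omega> ^ (CARD('a) - 1)) ^ (k div (CARD('a) - 1)) * \<omega> ^ (k mod (CARD('a) - 1))"
    by (simp only: power_add power_mult)
  also have "\<dots> = \<omega> ^ (k mod (CARD('a) - 1))"
    by (simp only: finite_field_pow_card_minus_one[OF generator_nonzero] power_one mult_1_left)
  finally show ?thesis
    by (rule sym)
qed

lemma generator_powE:
  assumes "x \<noteq> 0"
  obtains k where "k < CARD('a) - 1" and "x = \<omega> ^ k"
proof -
  obtain k where "x = \<omega> ^ k"
    using gen assms by (auto simp: is_generator_def)
  then show ?thesis
    using that[of "k mod (CARD('a) - 1)"] one_less_card_field[where 'a = 'a] generator_pow_mod by simp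
qed

lemma inj_on_generator_pow: "inj_on (\<lambda>k. \<omega> ^ k) {..<CARD('a) - 1}"
proof -
  have "UNIV - {0} \<subseteq> (\<lambda>k. \<omega> ^ k) ` {..<CARD('a) - 1}"
  proof
    fix x :: 'a
    assume "x \<in> UNIV - {0}"
    then obtain k where "k < CARD('a) - 1" and "x = \<omega> ^ k"
      using generator_powE by blast
    then show "x \<in> (\<lambda>k. \<omega> ^ k) ` {..<CARD('a) - 1}" by blast
  qed
  then have "(\<lambda>k. \<omega> ^ k) ` {..<CARD('a) - 1} = UNIV - {0}"
    using generator_nonzero by auto
  moreover have "card (UNIV - {0::'a}) = card {..<CARD('a) - 1}"
    by (simp add: card_Diff_subset)
  ultimately show ?thesis
    by (metis eq_card_imp_inj_on finite_lessThan)
qed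

lemma generator_pow_eq_one_iff: "\<omega> ^ k = 1 \<longleftrightarrow> (CARD('a) - 1) dvd k"
proof
  assume "\<omega> ^ k = 1"
  then have "\<omega> ^ (k mod (CARD('a) - 1)) = \<omega> ^ 0"
    by (simp only: generator_pow_mod power_0)
  then have "k mod (CARD('a) - 1) = 0"
    using one_less_card_field[where 'a = 'a] by (intro inj_onD[OF inj_on_generator_pow]) auto
  then show "(CARD('a) - 1) dvd k" by auto
next
  assume "(CARD('a) - 1) dvd k"
  then obtain m where "k = (CARD('a) - 1) * m" ..
  then show "\<omega> ^ k = 1"
    by (simp only: power_mult finite_field_pow_card_minus_one[OF generator_nonzero] power_one)
qed

end

lemma exists_nontrivial_solution_finite_field:
  fixes K :: "'e \<Rightarrow> 't \<Rightarrow> 'a::{finite,field}"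
  assumes "finite T" and "finite E" and "card E < card T"
  obtains \<mu> where "\<exists>t\<in>T. \<mu> t \<noteq> 0" and "\<forall>e\<in>E. (\<Sum>t\<in>T. K e t * \<mu> t) = 0"
proof -
  let ?\<Phi> = "\<lambda>\<mu>. restrict (\<lambda>e. \<Sum>t\<in>T. K e t * \<mu> t) E"
  have "CARD('a) ^ card E < CARD('a) ^ card T"
    using assms(3) one_less_card_field[where 'a = 'a] by (intro power_strict_increasing) auto
  with assms(1,2) have "card (T \<rightarrow>\<^sub>E (UNIV :: 'a set)) > card (E \<rightarrow>\<^sub>E (UNIV :: 'a set))"
    by (simp add: card_PiE)
  moreover have "?\<Phi> ` (T \<rightarrow>\<^sub>E UNIV) \<subseteq> E \<rightarrow>\<^sub>E UNIV"
    by auto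
  ultimately have "\<not> inj_on ?\<Phi> (T \<rightarrow>\<^sub>E UNIV)"
    using assms(2) card_inj_on_le[of ?\<Phi> "T \<rightarrow>\<^sub>E UNIV" "E \<rightarrow>\<^sub>E UNIV"] by (auto simp: finite_PiE)
  then obtain \<mu>\<^sub>1 \<mu>\<^sub>2 where \<mu>: "\<mu>\<^sub>1 \<in> T \<rightarrow>\<^sub>E UNIV" "\<mu>\<^sub>2 \<in> T \<rightarrow>\<^sub>E UNIV" "\<mu>\<^sub>1 \<noteq> \<mu>\<^sub>2"
    and eq: "?\<Phi> \<mu>\<^sub>1 = ?\<Phi> \<mu>\<^sub>2"
    unfolding inj_on_def by blast
  show ?thesis
  proof (rule that[of "\<lambda>t. \<mu>\<^sub>1 t - \<mu>\<^sub>2 t"])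
    have "\<forall>t. t \<notin> T \<longrightarrow> \<mu>\<^sub>1 t - \<mu>\<^sub>2 t = 0"
      using \<mu>(1,2) by (auto simp: PiE_def extensional_def)
    then show "\<exists>t\<in>T. \<mu>\<^sub>1 t - \<mu>\<^sub>2 t \<noteq> 0"
      using \<mu>(3) by (metis ext eq_iff_diff_eq_0)
    show "\<forall>e\<in>E. (\<Sum>t\<in>T. K e t * (\<mu>\<^sub>1 t - \<mu>\<^sub>2 t)) = 0"
    proof
      fix e assume "e \<in> E"
      then have "(\<Sum>t\<in>T. K e t * \<mu>\<^sub>1 t) = (\<Sum>t\<in>T. K e t * \<mu>\<^sub>2 t)"
        using fun_cong[OF eq, of e] by simp
      then show "(\<Sum>t\<in>T. K e t * (\<mu>\<^sub>1 t - \<mu>\<^sub>2 t)) = 0"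
        by (simp add: right_diff_distrib sum_subtractf)
    qed
  qed
qed

section \<open>Residue parts of polynomials\<close>

definition residue_part :: "nat \<Rightarrow> nat \<Rightarrow> 'a::comm_ring_1 poly \<Rightarrow> 'a poly" where
  "residue_part r a f = (\<Sum>i\<le>degree f. if i mod r = a then monom (coeff f i) i else 0)"

lemma coeff_residue_part: "coeff (residue_part r a f) k = (if k mod r = a then coeff f k else 0)"
proof -
  have "coeff (residue_part r a f) k =
      (\<Sum>i\<le>degree f. if i = k then (if k mod r = a then coeff f k else 0) else 0)"
    unfolding residue_part_def coeff_sum by (intro sum.cong) (auto simp: coeff_monom)
  then show ?thesis
    by (auto simp: coeff_eq_0)
qed

lemma sum_residue_parts:
  assumes "r > 0"
  shows "(\<Sum>a<r. residue_part r a f) = f"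
  by (rule poly_eqI) (simp add: coeff_sum coeff_residue_part assms)

lemma poly_residue_part_mult_root_of_unity:
  fixes z x :: "'a::comm_ring_1"
  assumes "z ^ r = 1"
  shows "poly (residue_part r a f) (z * x) = z ^ a * poly (residue_part r a f) x"
proof -
  have "coeff (residue_part r a f) i * z ^ i = z ^ a * coeff (residue_part r a f) i" for i
  proof (cases "i mod r = a")
    case True
    have "z ^ i = (z ^ r) ^ (i div r) * z ^ (i mod r)"
      by (metis power_add power_mult mult_div_mod_eq)
    then show ?thesis
      using True assms by simp
  qed (simp add: coeff_residue_part)
  then show ?thesis
    by (simp add: poly_altdef power_mult_distrib sum_distrib_left mult_ac)
qed

lemma poly_mult_root_of_unity:
  fixes z x :: "'a::comm_ring_1"
  assumes "z ^ r = 1" and "r > 0"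
  shows "poly f (z * x) = (\<Sum>a<r. z ^ a * poly (residue_part r a f) x)"
proof -
  have "poly f (z * x) = (\<Sum>a<r. poly (residue_part r a f) (z * x))"
    by (simp add: poly_sum[symmetric] sum_residue_parts[OF assms(2)])
  also have "\<dots> = (\<Sum>a<r. z ^ a * poly (residue_part r a f) x)"
    by (simp add: poly_residue_part_mult_root_of_unity[OF assms(1)])
  finally show ?thesis .
qed

text \<open>As a function of an \<open>r\<close>-th root of unity \<open>z\<close>, \<open>poly f (z * x)\<close> is a polynomial of
  degree \<open>< r\<close> whose coefficients are the values of the residue parts at \<open>x\<close>.\<close>
definition coset_poly :: "nat \<Rightarrow> 'a::comm_ring_1 poly \<Rightarrow> 'a \<Rightarrow> 'a poly" where
  "coset_poly r f x = (\<Sum>a<r. monom (poly (residue_part r a f) x) a)"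

lemma coeff_coset_poly: "coeff (coset_poly r f x) a = (if a < r then poly (residue_part r a f) x else 0)"
  unfolding coset_poly_def coeff_sum by (simp add: coeff_monom)

lemma degree_coset_poly_less:
  assumes "r > 0"
  shows "degree (coset_poly r f x) < r"
proof -
  have "degree (coset_poly r f x) \<le> r - 1"
    by (rule degree_le) (auto simp: coeff_coset_poly)
  then show ?thesis
    using assms by simp
qed

lemma poly_coset_poly:
  fixes z x :: "'a::comm_ring_1"
  assumes "z ^ r = 1" and "r > 0"
  shows "poly (coset_poly r f x) z = poly f (z * x)"
  unfolding poly_mult_root_of_unity[OF assms] coset_poly_def
  by (simp add: poly_sum poly_monom mult.commute)

lemma poly_sparsity_coset_poly_le:
  "poly_sparsity (coset_poly r f x) \<le> card {a. a < r \<and> poly (residue_part r a f) x \<noteq> 0}"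
  unfolding poly_sparsity_def by (rule card_mono) (auto simp: coeff_coset_poly split: if_splits)

section \<open>Determinants of polynomial matrices\<close>

lemma det_pivot_rows_nonzero:
  fixes v :: "nat \<Rightarrow> nat \<Rightarrow> 'a::field"
  assumes P: "P \<subseteq> {..<n}"
    and piv: "\<And>i. i \<in> P \<Longrightarrow> v i i \<noteq> 0"
    and off: "\<And>i k. i \<in> P \<Longrightarrow> k \<in> P \<Longrightarrow> k \<noteq> i \<Longrightarrow> v i k = 0"
  shows "det (mat n n (\<lambda>(i, k). if i \<in> P then v i k else of_bool (i = k))) \<noteq> 0"
    (is "det ?A \<noteq> 0")
proof
  assume "det ?A = 0"
  then obtain u where u: "u \<in> carrier_vec n" "u \<noteq> 0\<^sub>v n" "?A *\<^sub>v u = 0\<^sub>v n"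
    using det_0_iff_vec_prod_zero_field[of ?A n] by auto
  have row: "(\<Sum>k<n. ?A $$ (i, k) * u $ k) = 0" if "i < n" for i
    using arg_cong[OF u(3), of "\<lambda>y. y $ i"] that u(1)
    by (simp add: mult_mat_vec_def scalar_prod_def lessThan_atLeast0)
  have outside: "u $ i = 0" if "i < n" "i \<notin> P" for i
    using row[OF that(1)] that by (simp add: of_bool_def if_distrib[of "\<lambda>c. c * _"] cong: if_cong)
  have inside: "u $ i = 0" if "i \<in> P" for i
  proof -
    have "i < n" using that P by auto
    have "(\<Sum>k<n. ?A $$ (i, k) * u $ k) = (\<Sum>k<n. if k = i then v i i * u $ i else 0)"
      using that \<open>i < n\<close> off outside by (intro sum.cong) auto
    then have "v i i * u $ i = 0"
      using row[OF \<open>i < n\<close>] \<open>i < n\<close> by simp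
    then show ?thesis
      using piv[OF that] by simp
  qed
  have "u = 0\<^sub>v n"
    using u(1) inside outside by (intro eq_vecI) auto
  with u(2) show False ..
qed

lemma power_dvd_det_if_rows_dvd:
  fixes N :: "'a::comm_ring_1 mat"
  assumes N: "N \<in> carrier_mat n n" and P: "P \<subseteq> {..<n}"
    and dvd: "\<And>i j. i \<in> P \<Longrightarrow> j < n \<Longrightarrow> d dvd N $$ (i, j)"
  shows "d ^ card P dvd det N"
  unfolding det_def'[OF N]
proof (rule dvd_sum)
  fix \<sigma> assume "\<sigma> \<in> {\<sigma>. \<sigma> permutes {0..<n}}"
  then have \<sigma>: "\<sigma> i < n" if "i < n" for i
    using that by (auto simp: permutes_in_image)
  have "(\<Prod>i\<in>P. d) dvd (\<Prod>i\<in>P. N $$ (i, \<sigma> i))"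
    using P \<sigma> dvd by (intro prod_dvd_prod) auto
  moreover have "(\<Prod>i = 0..<n. N $$ (i, \<sigma> i)) =
      (\<Prod>i\<in>P. N $$ (i, \<sigma> i)) * (\<Prod>i\<in>{0..<n} - P. N $$ (i, \<sigma> i))"
    using P by (subst prod.subset_diff[of P]) (auto simp: mult.commute)
  ultimately show "d ^ card P dvd signof \<sigma> * (\<Prod>i = 0..<n. N $$ (i, \<sigma> i))"
    by (simp add: dvd_mult)
qed

text \<open>Linear combinations of rows of \<open>M\<close>, in echelon position on \<open>P\<close>, that vanish at \<open>p\<close> give
  a constant invertible \<open>A\<close> such that \<open>[:-p, 1:]\<close> divides the rows \<open>P\<close> of \<open>A * M\<close>.\<close>
lemma card_le_order_det:
  fixes M :: "'a::field poly mat" and v :: "nat \<Rightarrow> nat \<Rightarrow> 'a"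
  assumes M: "M \<in> carrier_mat n n" and det: "det M \<noteq> 0" and P: "P \<subseteq> {..<n}"
    and piv: "\<And>i. i \<in> P \<Longrightarrow> v i i \<noteq> 0"
    and off: "\<And>i k. i \<in> P \<Longrightarrow> k \<in> P \<Longrightarrow> k \<noteq> i \<Longrightarrow> v i k = 0"
    and van: "\<And>i j. i \<in> P \<Longrightarrow> j < n \<Longrightarrow> (\<Sum>k<n. v i k * poly (M $$ (k, j)) p) = 0"
  shows "card P \<le> order p (det M)"
proof -
  define A\<^sub>0 where "A\<^sub>0 = mat n n (\<lambda>(i, k). if i \<in> P then v i k else of_bool (i = k))"
  define A where "A = map_mat (\<lambda>c. [:c:]) A\<^sub>0"
  have A: "A \<in> carrier_mat n n"
    unfolding A_def A\<^sub>0_def by simp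
  interpret poly_at: comm_ring_hom "\<lambda>q. poly q p"
    by standard auto
  have "map_mat (\<lambda>q. poly q p) A = A\<^sub>0"
    unfolding A_def by (rule eq_matI) (auto simp: A\<^sub>0_def)
  then have "poly (det A) p \<noteq> 0"
    using det_pivot_rows_nonzero[where v = v, OF P piv off] poly_at.hom_det[of A]
    unfolding A\<^sub>0_def by simp
  then have order_A: "order p (det A) = 0" and "det A \<noteq> 0"
    by (auto intro: order_0I)
  have "[:-p, 1:] dvd (A * M) $$ (i, j)" if "i \<in> P" "j < n" for i j
  proof -
    have "i < n" using that P by auto
    then have "poly ((A * M) $$ (i, j)) p = (\<Sum>k<n. v i k * poly (M $$ (k, j)) p)"
      using that A M
      by (simp add: scalar_prod_def poly_sum lessThan_atLeast0 A_def A\<^sub>0_def)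
    then show ?thesis
      using van[OF that] by (simp add: dvd_iff_poly_eq_0)
  qed
  then have "[:-p, 1:] ^ card P dvd det A * det M"
    using power_dvd_det_if_rows_dvd[of "A * M" n P] A M P by (simp add: det_mult)
  then have "card P \<le> order p (det A * det M)"
    using \<open>det A \<noteq> 0\<close> det by (simp add: order_divides)
  also have "\<dots> = order p (det M)"
    using \<open>det A \<noteq> 0\<close> det order_A by (simp add: order_mult)
  finally show ?thesis .
qed

lemma coeff_det_eq_det_lead_coeffs:
  fixes M :: "'a::idom poly mat"
  assumes M: "M \<in> carrier_mat n n"
    and nz: "\<And>i j. i < n \<Longrightarrow> j < n \<Longrightarrow> M $$ (i, j) \<noteq> 0"
    and deg: "\<And>i j. i < n \<Longrightarrow> j < n \<Longrightarrow> degree (M $$ (i, j)) = d i"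
  shows "coeff (det M) (\<Sum>i<n. d i) = det (mat n n (\<lambda>(i, j). lead_coeff (M $$ (i, j))))"
    (is "_ = det ?L")
proof -
  have "coeff (\<Prod>i = 0..<n. M $$ (i, \<sigma> i)) (\<Sum>i<n. d i) = (\<Prod>i = 0..<n. ?L $$ (i, \<sigma> i))"
    if "\<sigma> permutes {0..<n}" for \<sigma>
  proof -
    have \<sigma>: "\<sigma> i < n" if "i < n" for i
      using \<open>\<sigma> permutes _\<close> that by (auto simp: permutes_in_image)
    have "degree (\<Prod>i = 0..<n. M $$ (i, \<sigma> i)) = (\<Sum>i<n. d i)"
      using nz deg \<sigma> by (simp add: degree_prod_eq_sum_degree lessThan_atLeast0)
    then show ?thesis
      using \<sigma> by (simp add: lead_coeff_prod[symmetric])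
  qed
  then show ?thesis
    unfolding det_def'[OF M] det_def'[of ?L n, simplified] coeff_sum
    by (intro sum.cong) (simp_all add: of_int_poly)
qed

lemma det_scaled_vandermonde_nonzero:
  fixes c x :: "nat \<Rightarrow> 'a::field"
  assumes c: "\<And>i. i < n \<Longrightarrow> c i \<noteq> 0" and x: "inj_on x {..<n}"
  shows "det (mat n n (\<lambda>(i, j). c i * x i ^ j)) \<noteq> 0"
    (is "det ?V \<noteq> 0")
proof
  assume "det ?V = 0"
  then obtain u where u: "u \<in> carrier_vec n" "u \<noteq> 0\<^sub>v n" "?V *\<^sub>v u = 0\<^sub>v n"
    using det_0_iff_vec_prod_zero_field[of ?V n] by auto
  define U where "U = (\<Sum>j<n. monom (u $ j) j)"
  have coeff_U: "coeff U j = (if j < n then u $ j else 0)" for j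
    unfolding U_def coeff_sum by (simp add: coeff_monom)
  have "poly U (x i) = 0" if "i < n" for i
  proof -
    have "c i * (\<Sum>j<n. u $ j * x i ^ j) = 0"
      using arg_cong[OF u(3), of "\<lambda>y. y $ i"] that u(1)
      by (simp add: mult_mat_vec_def scalar_prod_def lessThan_atLeast0 sum_distrib_left mult_ac)
    then show ?thesis
      using c[OF that] by (simp add: U_def poly_sum poly_monom)
  qed
  have "U = 0"
  proof (rule ccontr)
    assume "U \<noteq> 0"
    have "n = card (x ` {..<n})"
      using x by (simp add: card_image)
    also have "\<dots> \<le> card {y. poly U y = 0}"
      using \<open>U \<noteq> 0\<close> \<open>\<And>i. i < n \<Longrightarrow> poly U (x i) = 0\<close>
      by (intro card_mono poly_roots_finite) auto
    also have "\<dots> \<le> degree U"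
      using \<open>U \<noteq> 0\<close> by (rule card_poly_roots_bound)
    finally have "n \<le> degree U" .
    then show False
      using \<open>U \<noteq> 0\<close> coeff_U[of "degree U"] by simp
  qed
  then have "u $ j = 0" if "j < n" for j
    using coeff_U[of j] that by simp
  then have "u = 0\<^sub>v n"
    using u(1) by (intro eq_vecI) auto
  with u(2) show False ..
qed

lemma sum_order_le_degree_on:
  assumes "p \<noteq> 0" and "finite X"
  shows "(\<Sum>x\<in>X. order x p) \<le> degree p"
proof -
  have "(\<Sum>x\<in>X. order x p) = (\<Sum>x\<in>X \<inter> {x. poly p x = 0}. order x p)"
    using assms(2) by (intro sum.mono_neutral_right) (auto simp: order_0I)
  also have "\<dots> \<le> (\<Sum>x | poly p x = 0. order x p)"
    using poly_roots_finite[OF assms(1)] by (intro sum_mono2) auto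
  also have "\<dots> \<le> degree p"
    using assms(1) by (rule sum_order_le_degree)
  finally show ?thesis .
qed

definition dilation_matrix :: "'a::comm_ring_1 \<Rightarrow> nat \<Rightarrow> (nat \<Rightarrow> 'a poly) \<Rightarrow> 'a poly mat" where
  "dilation_matrix \<omega> n g = mat n n (\<lambda>(i, j). g i \<circ>\<^sub>p [:0, \<omega> ^ j:])"

lemma dilation_matrix_carrier: "dilation_matrix \<omega> n g \<in> carrier_mat n n"
  by (simp add: dilation_matrix_def)

lemma poly_dilation_matrix:
  "i < n \<Longrightarrow> j < n \<Longrightarrow> poly (dilation_matrix \<omega> n g $$ (i, j)) x = poly (g i) (\<omega> ^ j * x)"
  by (simp add: dilation_matrix_def poly_pcompose mult.commute)

lemma degree_det_dilation_matrix_le: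
  fixes \<omega> :: "'a::field"
  assumes "\<And>i. i < n \<Longrightarrow> degree (g i) \<le> d"
  shows "degree (det (dilation_matrix \<omega> n g)) \<le> d * n"
  by (rule degree_det_le[OF _ dilation_matrix_carrier])
    (use assms in \<open>auto simp: dilation_matrix_def degree_pcompose intro: le_trans[OF mult_le_one]\<close>)

text \<open>The coefficient of \<open>det (dilation_matrix \<omega> n g)\<close> at \<open>\<Sum>i<n. degree (g i)\<close> is a scaled
  Vandermonde determinant in the points \<open>\<omega> ^ degree (g i)\<close>.\<close>
lemma det_dilation_matrix_nonzero:
  fixes \<omega> :: "'a::field"
  assumes "\<omega> \<noteq> 0" and g: "\<And>i. i < n \<Longrightarrow> g i \<noteq> 0"
    and inj: "inj_on (\<lambda>i. \<omega> ^ degree (g i)) {..<n}"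
  shows "det (dilation_matrix \<omega> n g) \<noteq> 0"
proof -
  let ?M = "dilation_matrix \<omega> n g"
  have entry: "?M $$ (i, j) = g i \<circ>\<^sub>p [:0, \<omega> ^ j:]" if "i < n" "j < n" for i j
    using that by (simp add: dilation_matrix_def)
  have lead: "lead_coeff (g i \<circ>\<^sub>p [:0, \<omega> ^ j:]) = lead_coeff (g i) * (\<omega> ^ degree (g i)) ^ j" for i j
    using \<open>\<omega> \<noteq> 0\<close> by (simp add: lead_coeff_comp power_mult[symmetric] mult.commute)
  have "?M $$ (i, j) \<noteq> 0" and "degree (?M $$ (i, j)) = degree (g i)" if "i < n" "j < n" for i j
    using \<open>\<omega> \<noteq> 0\<close> g[OF that(1)] that by (simp_all add: entry degree_pcompose pcompose_eq_0_iff)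
  then have "coeff (det ?M) (\<Sum>i<n. degree (g i)) = det (mat n n (\<lambda>(i, j). lead_coeff (?M $$ (i, j))))"
    by (intro coeff_det_eq_det_lead_coeffs[OF dilation_matrix_carrier])
  also have "\<dots> = det (mat n n (\<lambda>(i, j). lead_coeff (g i) * (\<omega> ^ degree (g i)) ^ j))"
    by (intro arg_cong[where f = det] eq_matI) (simp_all add: entry lead)
  also have "\<dots> \<noteq> 0"
    using g inj by (intro det_scaled_vandermonde_nonzero) auto
  finally show ?thesis
    by auto
qed

section \<open>Real estimates\<close>

lemma zero_blocks_bound_arith:
  fixes w r s B Z D L :: real
  assumes "1 \<le> w" "w \<le> r" "1 \<le> r" "r < s + 1" "0 \<le> L"
    and zeros: "w * (r * Z) \<le> w * B + (r - 1) * D" and D: "(s - w + 1) * D \<le> L * w"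
  shows "r * Z \<le> B + (r - 1) * L / (s + 1 - r)"
proof -
  have "D \<le> L * w / (s - w + 1)"
    using D assms(2,4) by (simp add: field_simps)
  also have "\<dots> \<le> L * w / (s + 1 - r)"
    using assms by (intro divide_left_mono mult_nonneg_nonneg) auto
  finally have "(r - 1) * D \<le> (r - 1) * (L * w / (s + 1 - r))"
    using assms(3) by (intro mult_left_mono) auto
  with zeros have "w * (r * Z) \<le> w * (B + (r - 1) * L / (s + 1 - r))"
    by (simp add: field_simps)
  then show ?thesis
    using assms(1) by simp
qed

lemma distance_term_nonpos:
  fixes \<delta> r s :: real
  assumes "0 \<le> \<delta>" and "1 \<le> r" and "0 < s" and "\<delta> * r \<le> 1"
  shows "\<delta> - (1 + r ^ 2 / s) * sqrt (\<delta> / r) \<le> 0"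
proof -
  have "\<delta> * (\<delta> * r) \<le> \<delta>"
    using assms by (intro mult_right_le_one_le) auto
  then have "\<delta> \<le> sqrt (\<delta> / r)"
    using assms(2) by (intro real_le_rsqrt) (simp add: power2_eq_square field_simps)
  moreover have "0 \<le> r ^ 2 / s * sqrt (\<delta> / r)"
    using assms by simp
  ultimately show ?thesis
    by (simp add: algebra_simps)
qed

lemma distance_term_le:
  fixes \<delta> r s :: real
  assumes \<delta>: "0 \<le> \<delta>" "\<delta> \<le> 1" and r: "1 \<le> r" and s: "2 * r ^ 2 \<le> s" and "1 < \<delta> * r"
  shows "\<delta> - (1 + r ^ 2 / s) * sqrt (\<delta> / r) \<le> \<delta> - \<delta> / r - (r - 1) / (s + 1 - r)"
proof -
  have "r \<le> r ^ 2"
    using r by (intro self_le_power) auto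
  then have "0 < s" and "r < s + 1" and "r ^ 2 \<le> s"
    using r s by linarith+
  have "\<delta> / r \<le> sqrt (\<delta> / r)"
  proof -
    have "\<delta> / r * (\<delta> / r) \<le> \<delta> / r"
      using \<delta> r by (intro mult_left_le_one_le) auto
    then show ?thesis
      by (intro real_le_rsqrt) (simp add: power2_eq_square)
  qed
  moreover have "(r - 1) / (s + 1 - r) \<le> r ^ 2 / s * sqrt (\<delta> / r)"
  proof -
    have "(r - 1) * s \<le> r * (s + 1 - r)"
      using \<open>r ^ 2 \<le> s\<close> r by (simp add: algebra_simps power2_eq_square)
    then have "(r - 1) / (s + 1 - r) \<le> r / s"
      using \<open>0 < s\<close> \<open>r < s + 1\<close> by (simp add: field_simps)
    also have "\<dots> = r ^ 2 / s * (1 / r)"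
      using r by (simp add: power2_eq_square)
    also have "\<dots> \<le> r ^ 2 / s * sqrt (\<delta> / r)"
      using \<open>1 < \<delta> * r\<close> r \<open>0 < s\<close>
      by (intro mult_left_mono real_le_rsqrt) (auto simp: power2_eq_square field_simps)
    finally show ?thesis .
  qed
  ultimately show ?thesis
    by (simp add: distrib_right)
qed

lemma zero_blocks_loss_le:
  fixes r s B Z \<delta> :: real
  assumes r: "1 \<le> r" "r < s + 1" and "0 \<le> B" and \<delta>: "0 \<le> \<delta>" "\<delta> \<le> 1"
    and zeros: "r * Z \<le> B + (r - 1) * ((1 - \<delta>) * s * B) / (s + 1 - r)"
  shows "B * (\<delta> - \<delta> / r - (r - 1) / (s + 1 - r)) \<le> B - Z"
proof -
  have "Z \<le> (B + (r - 1) * ((1 - \<delta>) * s * B) / (s + 1 - r)) / r"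
    using zeros r by (simp add: pos_le_divide_eq mult.commute)
  then have Z: "Z \<le> B / r + (r - 1) * ((1 - \<delta>) * s * B) / (r * (s + 1 - r))"
    by (simp add: add_divide_distrib mult.commute)
  have "B - B / r - (r - 1) * ((1 - \<delta>) * s * B) / (r * (s + 1 - r))
      - B * (\<delta> - \<delta> / r - (r - 1) / (s + 1 - r))
    = B * (r - 1) * (r - (1 - \<delta>) * (r - 1)) / (r * (s + 1 - r))"
    using r by (simp add: divide_simps) (simp add: algebra_simps)
  also have "0 \<le> \<dots>"
  proof -
    have "(1 - \<delta>) * (r - 1) \<le> r - 1"
      using \<delta> r by (intro mult_left_le_one_le) auto
    then show ?thesis
      using \<open>0 \<le> B\<close> r by (intro divide_nonneg_pos mult_nonneg_nonneg) auto
  qed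
  finally show ?thesis
    using Z by simp
qed

lemma folded_distance_arith:
  fixes r s B Z \<delta> :: real
  assumes r: "1 \<le> r" and s: "2 * r ^ 2 \<le> s" and "0 < B" and \<delta>: "0 \<le> \<delta>" "\<delta> \<le> 1" and "Z \<le> B"
    and zeros: "r * Z \<le> B + (r - 1) * ((1 - \<delta>) * s * B) / (s + 1 - r)"
  shows "B * (\<delta> - (1 + r ^ 2 / s) * sqrt (\<delta> / r)) \<le> B - Z"
proof -
  have "r \<le> r ^ 2"
    using r by (intro self_le_power) auto
  show ?thesis
  proof (cases "\<delta> * r \<le> 1")
    case True
    then have "\<delta> - (1 + r ^ 2 / s) * sqrt (\<delta> / r) \<le> 0"
      using \<open>r \<le> r ^ 2\<close> \<delta> r s by (intro distance_term_nonpos) auto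
    then have "B * (\<delta> - (1 + r ^ 2 / s) * sqrt (\<delta> / r)) \<le> 0"
      using \<open>0 < B\<close> by (intro mult_nonneg_nonpos) auto
    then show ?thesis
      using \<open>Z \<le> B\<close> by linarith
  next
    case False
    then have "B * (\<delta> - (1 + r ^ 2 / s) * sqrt (\<delta> / r)) \<le> B * (\<delta> - \<delta> / r - (r - 1) / (s + 1 - r))"
      using \<delta> r s \<open>0 < B\<close> by (intro mult_left_mono distance_term_le) auto
    also have "\<dots> \<le> B - Z"
      using \<open>r \<le> r ^ 2\<close> r s \<open>0 < B\<close> \<delta> zeros by (intro zero_blocks_loss_le) auto
    finally show ?thesis .
  qed
qed

section \<open>Roots of unity and the uncertainty hypothesis\<close>

locale tamo_barg =
  fixes \<omega> :: "'a::{finite,field}" and r :: nat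
  assumes generator: "is_generator \<omega>"
    and r_dvd: "r dvd CARD('a) - 1"
    and r_ge_3: "3 \<le> r"
    and uncertainty: "\<And>f :: 'a poly. f \<noteq> 0 \<Longrightarrow> degree f < r \<Longrightarrow>
        r + 1 \<le> poly_sparsity f + card {x. x \<noteq> 0 \<and> x ^ r = 1 \<and> poly f x \<noteq> 0}"
begin

definition n :: nat where "n = CARD('a) - 1"

definition \<zeta> :: 'a where "\<zeta> = \<omega> ^ (n div r)"

lemma r_pos: "0 < r"
  using r_ge_3 by simp

lemma n_pos: "0 < n"
  using one_less_card_field[where 'a = 'a] by (simp add: n_def)

lemma r_times_n_div_r: "r * (n div r) = n"
  using r_dvd by (simp add: n_def)

lemma zeta_pow_eq: "\<zeta> ^ t = \<omega> ^ (t * (n div r))"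
  by (simp add: \<zeta>_def power_mult[symmetric] mult.commute)

lemma omega_pow_mod: "\<omega> ^ (k mod n) = \<omega> ^ k"
  unfolding n_def by (rule generator_pow_mod[OF generator])

lemma omega_pow_eq_one_iff: "\<omega> ^ k = 1 \<longleftrightarrow> n dvd k"
  unfolding n_def by (rule generator_pow_eq_one_iff[OF generator])

lemma zeta_pow_root_of_unity: "(\<zeta> ^ t) ^ r = 1"
proof -
  have "(\<zeta> ^ t) ^ r = \<omega> ^ (t * (r * (n div r)))"
    by (simp add: zeta_pow_eq power_mult[symmetric] mult_ac)
  then show ?thesis
    by (simp add: r_times_n_div_r omega_pow_eq_one_iff)
qed

lemma root_of_unity_eq_zeta_pow:
  assumes "x \<noteq> 0" and "x ^ r = 1"
  obtains t where "t < r" and "x = \<zeta> ^ t"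
proof -
  obtain k where k: "k < n" "x = \<omega> ^ k"
    using generator_powE[OF generator assms(1)] unfolding n_def .
  then have "r * (n div r) dvd r * k"
    using assms(2) by (simp add: r_times_n_div_r omega_pow_eq_one_iff power_mult[symmetric] mult.commute)
  then have "n div r dvd k"
    using r_pos by simp
  then obtain t where t: "k = (n div r) * t" ..
  have "(n div r) * t < (n div r) * r"
    using k(1) by (simp add: t r_times_n_div_r[unfolded mult.commute[of r]])
  then have "t < r"
    by simp
  then show ?thesis
    using that k(2) by (simp add: t zeta_pow_eq mult.commute)
qed

lemma card_zeros_less_sparsity:
  fixes P :: "'a poly"
  assumes "P \<noteq> 0" and "degree P < r" and T: "T \<subseteq> {..<r}"
    and zeros: "\<And>t. t \<in> T \<Longrightarrow> poly P (\<zeta> ^ t) = 0"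
  shows "card T < poly_sparsity P"
proof -
  have "{x. x \<noteq> 0 \<and> x ^ r = 1 \<and> poly P x \<noteq> 0} \<subseteq> (\<lambda>t. \<zeta> ^ t) ` ({..<r} - T)"
  proof
    fix x assume x: "x \<in> {x. x \<noteq> 0 \<and> x ^ r = 1 \<and> poly P x \<noteq> 0}"
    then obtain t where "t < r" and "x = \<zeta> ^ t"
      using root_of_unity_eq_zeta_pow by blast
    with x zeros show "x \<in> (\<lambda>t. \<zeta> ^ t) ` ({..<r} - T)"
      by auto
  qed
  then have "card {x. x \<noteq> 0 \<and> x ^ r = 1 \<and> poly P x \<noteq> 0} \<le> card ((\<lambda>t. \<zeta> ^ t) ` ({..<r} - T))"
    by (intro card_mono) auto
  also have "\<dots> \<le> card ({..<r} - T)"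
    by (rule card_image_le) simp
  also have "\<dots> = r - card T"
    using T by (simp add: card_Diff_subset finite_subset)
  finally show ?thesis
    using uncertainty[OF assms(1,2)] card_mono[OF _ T] by simp
qed

text \<open>A vector \<open>\<mu>\<close> on \<open>T\<close> whose discrete Fourier transform vanishes on \<open>E\<close> exists by
  counting dimensions; by the uncertainty principle its transform cannot vanish at \<open>a\<close> as well.\<close>
lemma exists_transform_vanishing_except:
  assumes T: "T \<subseteq> {..<r}" and E: "E \<subseteq> {..<r}" and a: "a < r" "a \<notin> E"
    and card_T: "card T = card E + 1"
  obtains \<mu> where "\<forall>e\<in>E. (\<Sum>t\<in>T. \<zeta> ^ (t * e) * \<mu> t) = 0"
    and "(\<Sum>t\<in>T. \<zeta> ^ (t * a) * \<mu> t) \<noteq> 0"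
proof -
  have fin: "finite T" "finite E"
    using finite_subset[OF T] finite_subset[OF E] by auto
  obtain \<mu> where nz: "\<exists>t\<in>T. \<mu> t \<noteq> 0"
    and van: "\<forall>e\<in>E. (\<Sum>t\<in>T. \<zeta> ^ (t * e) * \<mu> t) = 0"
    by (rule exists_nontrivial_solution_finite_field[where K = "\<lambda>e t. \<zeta> ^ (t * e)", OF fin(1,2)])
      (use card_T in simp_all)
  define P where "P = (\<Sum>t\<in>T. monom (\<mu> t) t)"
  have coeff_P: "coeff P k = (if k \<in> T then \<mu> k else 0)" for k
    unfolding P_def coeff_sum coeff_monom using fin(1) by (simp add: sum.delta)
  have poly_P: "poly P (\<zeta> ^ e) = (\<Sum>t\<in>T. \<zeta> ^ (t * e) * \<mu> t)" for e
    unfolding P_def by (simp add: poly_sum poly_monom power_mult[symmetric] mult.commute)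
  obtain t where "t \<in> T" and "\<mu> t \<noteq> 0"
    using nz ..
  then have "P \<noteq> 0"
    by (auto simp: poly_eq_iff coeff_P)
  have "degree P < r"
    using T r_pos by (intro degree_lessI) (auto simp: coeff_P)
  have "poly P (\<zeta> ^ a) \<noteq> 0"
  proof
    assume "poly P (\<zeta> ^ a) = 0"
    then have "card (insert a E) < poly_sparsity P"
      using poly_P van E a by (intro card_zeros_less_sparsity[OF \<open>P \<noteq> 0\<close> \<open>degree P < r\<close>]) auto
    moreover have "poly_sparsity P \<le> card T"
      unfolding poly_sparsity_def using fin(1) by (intro card_mono) (auto simp: coeff_P split: if_splits)
    ultimately show False
      using card_T fin a(2) by simp
  qed
  then show ?thesis
    using poly_P[of a] by (intro that[OF van]) simp
qed

lemma tb_index_mod_ne: "i \<in> tb_index_set CARD('a) r l \<Longrightarrow> i mod r \<noteq> r - 1"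
  using r_ge_3 by (auto simp: tb_index_set_def)

lemma ev_in_dual_code:
  fixes f :: "'a poly"
  assumes "\<And>i. coeff f i \<noteq> 0 \<Longrightarrow> i mod r = 1"
  shows "ev f \<in> dual_code (tb_code r l)"
  unfolding dual_code_def
proof (intro CollectI conjI ballI)
  show "ev f 0 = 0"
    by (simp add: ev_def)
  fix c :: "'a \<Rightarrow> 'a"
  assume "c \<in> tb_code r l"
  then obtain g where c: "c = ev g" and g: "\<And>i. coeff g i \<noteq> 0 \<Longrightarrow> i \<in> tb_index_set CARD('a) r l"
    unfolding tb_code_def by blast
  have "(\<Sum>x\<in>UNIV - {0::'a}. x ^ (i + j)) = 0" if "coeff g i \<noteq> 0" "coeff f j \<noteq> 0" for i j
  proof (rule sum_nonzero_powers_eq_0[OF generator_nonzero[OF generator]])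
    have "i mod r + 1 < r"
      using tb_index_mod_ne[OF g[OF that(1)]] mod_less_divisor[OF r_pos, of i] by linarith
    moreover have "(i + j) mod r = (i mod r + j mod r) mod r"
      by (rule mod_add_eq[symmetric])
    ultimately have "(i + j) mod r = i mod r + 1"
      using assms[OF that(2)] by simp
    then have "\<not> r dvd i + j"
      by (simp add: dvd_eq_mod_eq_0)
    moreover have "r dvd n"
      using r_dvd by (simp add: n_def)
    ultimately have "\<not> n dvd i + j"
      by (meson dvd_trans)
    then show "\<omega> ^ (i + j) \<noteq> 1"
      by (simp add: omega_pow_eq_one_iff)
  qed
  then have "(\<Sum>x\<in>UNIV - {0}. poly g x * poly f x) = 0"
    by (rule sum_nonzero_poly_mult_eq_0)
  then show "(\<Sum>x\<in>UNIV - {0}. c x * ev f x) = 0"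
    by (simp add: c ev_def)
qed

lemma exists_residue_part_if_not_dual:
  fixes f :: "'a poly"
  assumes "ev f \<notin> dual_code (tb_code r l)"
  shows "\<exists>a<r. a \<noteq> 1 \<and> residue_part r a f \<noteq> 0"
proof (rule ccontr)
  assume no_part: "\<not> ?thesis"
  have "i mod r = 1" if "coeff f i \<noteq> 0" for i
  proof -
    have "residue_part r (i mod r) f \<noteq> 0"
      using that by (auto simp: poly_eq_iff coeff_residue_part)
    with no_part show ?thesis
      using mod_less_divisor[OF r_pos, of i] by auto
  qed
  then show False
    using assms ev_in_dual_code by blast
qed

end

section \<open>Zero blocks of a codeword\<close>

lemma bij_betw_add_mod:
  fixes m c :: nat
  assumes "0 < m"
  shows "bij_betw (\<lambda>b. (b + c) mod m) {..<m} {..<m}"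
proof (rule bij_betwI[where g = "\<lambda>b. (b + (m - c mod m)) mod m"])
  have cancel: "(b + c + (m - c mod m)) mod m = b" if "b \<in> {..<m}" for b
  proof -
    have "b + c + (m - c mod m) = b + (m * (c div m) + m)"
      using mod_less_divisor[OF assms, of c] mult_div_mod_eq[of m c] by linarith
    also have "\<dots> = b + m * Suc (c div m)"
      by simp
    finally show ?thesis
      using that by (simp only: mod_mult_self2 lessThan_iff mod_less)
  qed
  show "(\<lambda>b. (b + c) mod m) \<in> {..<m} \<rightarrow> {..<m}" "(\<lambda>b. (b + (m - c mod m)) mod m) \<in> {..<m} \<rightarrow> {..<m}"
    using assms by auto
  show "((b + c) mod m + (m - c mod m)) mod m = b" if "b \<in> {..<m}" for b
    using cancel[OF that] by (simp only: mod_add_left_eq)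
  show "((b + (m - c mod m)) mod m + c) mod m = b" if "b \<in> {..<m}" for b
    using cancel[OF that] by (simp only: mod_add_left_eq add.assoc add.commute[of "m - c mod m" c])
qed

locale tamo_barg_codeword = tamo_barg \<omega> r for \<omega> :: "'a::{finite,field}" and r +
  fixes s l :: nat and f :: "'a poly"
  assumes s_dvd: "s dvd (CARD('a) - 1) div r"
    and r_le_s: "r \<le> s"
    and l_le: "l \<le> CARD('a) - 1"
    and coeffs: "\<And>i. coeff f i \<noteq> 0 \<Longrightarrow> i \<in> tb_index_set CARD('a) r l"
    and nonzero_part: "\<exists>a<r. a \<noteq> 1 \<and> residue_part r a f \<noteq> 0"
begin

abbreviation part :: "nat \<Rightarrow> 'a poly" where
  "part a \<equiv> residue_part r a f"

text \<open>Class \<open>1\<close> is left out: its part need not have degree \<open>< l\<close>, so instead the relations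
  below are made to vanish on it.\<close>
definition support_classes :: "nat set" where
  "support_classes = {a. a < r \<and> a \<noteq> 1 \<and> part a \<noteq> 0}"

definition w :: nat where
  "w = card support_classes"

definition class_enum :: "nat \<Rightarrow> nat" where
  "class_enum = (!) (sorted_list_of_set support_classes)"

definition blocks :: nat where
  "blocks = n div s"

definition shift :: nat where
  "shift = n div r div s"

definition zero_block :: "nat \<Rightarrow> bool" where
  "zero_block b \<longleftrightarrow> (\<forall>j<s. poly f (\<omega> ^ (s * b + j)) = 0)"

definition zero_shifts :: "nat \<Rightarrow> nat set" where
  "zero_shifts b = {t. t < r \<and> zero_block ((b + t * shift) mod blocks)}"

abbreviation W :: "'a poly" where
  "W \<equiv> det (dilation_matrix \<omega> w (\<lambda>i. part (class_enum i)))"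

lemma s_pos: "0 < s"
  using r_le_s r_pos by simp

lemma s_times_shift: "s * shift = n div r"
  using s_dvd by (simp add: shift_def n_def)

lemma s_times_blocks: "s * blocks = n"
proof -
  have "s dvd n"
    using s_dvd dvd_trans[of s "n div r" n] r_times_n_div_r
    by (metis dvd_triv_right n_def)
  then show ?thesis
    by (simp add: blocks_def)
qed

lemma blocks_pos: "0 < blocks"
  using s_times_blocks n_pos by (cases "blocks = 0") auto

lemma omega_pow_shifted_block:
  "\<omega> ^ (s * ((b + t * shift) mod blocks) + j) = \<zeta> ^ t * \<omega> ^ (s * b + j)"
proof -
  have "(s * ((b + t * shift) mod blocks) + j) mod n = (t * (n div r) + (s * b + j)) mod n"
  proof -
    have "s * ((b + t * shift) mod blocks) = s * (b + t * shift) mod n"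
      using s_times_blocks by (simp add: mult_mod_right)
    moreover have "s * (b + t * shift) + j = t * (n div r) + (s * b + j)"
      using s_times_shift by (simp add: algebra_simps)
    ultimately show ?thesis
      by (metis mod_add_left_eq)
  qed
  then have "\<omega> ^ (s * ((b + t * shift) mod blocks) + j) = \<omega> ^ (t * (n div r) + (s * b + j))"
    by (metis omega_pow_mod)
  then show ?thesis
    by (simp add: power_add zeta_pow_eq)
qed

lemma part_r_minus_1: "part (r - 1) = 0"
  using coeffs tb_index_mod_ne by (auto simp: poly_eq_iff coeff_residue_part)

lemma support_classes_subset: "support_classes \<subseteq> {..<r} - {1, r - 1}"
  using part_r_minus_1 by (auto simp: support_classes_def)

lemma finite_support_classes: "finite support_classes"
  using support_classes_subset by (rule finite_subset) simp

lemma w_le: "w + 2 \<le> r"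
proof -
  have "w \<le> card ({..<r} - {1, r - 1})"
    unfolding w_def using support_classes_subset by (rule card_mono[rotated]) simp
  also have "\<dots> = r - 2"
    using r_ge_3 by (subst card_Diff_subset) auto
  finally show ?thesis
    using r_ge_3 by simp
qed

lemma w_pos: "0 < w"
  using nonzero_part finite_support_classes by (auto simp: w_def support_classes_def card_gt_0_iff)

lemma degree_part_le:
  assumes "a \<noteq> 1"
  shows "degree (part a) \<le> l - 1"
proof (rule degree_le, intro allI impI)
  fix i assume "l - 1 < i"
  show "coeff (part a) i = 0"
  proof (rule ccontr)
    assume "coeff (part a) i \<noteq> 0"
    then have "i mod r = a" and "coeff f i \<noteq> 0"
      by (auto simp: coeff_residue_part split: if_splits)
    then show False
      using coeffs[of i] assms r_ge_3 \<open>l - 1 < i\<close> by (auto simp: tb_index_set_def)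
  qed
qed

lemma degree_part_mod: "part a \<noteq> 0 \<Longrightarrow> degree (part a) mod r = a"
  using coeff_residue_part[of r a f "degree (part a)"] by (metis leading_coeff_0_iff)

lemma bij_class_enum: "bij_betw class_enum {..<w} support_classes"
  using bij_betw_nth[of "sorted_list_of_set support_classes" "{..<w}" support_classes] finite_support_classes
  by (simp add: class_enum_def w_def lessThan_atLeast0)

lemma class_enum_in_support_classes: "i < w \<Longrightarrow> class_enum i \<in> support_classes"
  using bij_class_enum by (auto dest: bij_betw_apply)

lemma part_class_enum_nonzero: "i < w \<Longrightarrow> part (class_enum i) \<noteq> 0"
  using class_enum_in_support_classes by (simp add: support_classes_def)

lemma inj_on_degree_part_class_enum: "inj_on (\<lambda>i. degree (part (class_enum i))) {..<w}"
proof (rule inj_onI)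
  fix i j
  assume "i \<in> {..<w}" "j \<in> {..<w}" and "degree (part (class_enum i)) = degree (part (class_enum j))"
  then have "class_enum i = class_enum j"
    using degree_part_mod part_class_enum_nonzero by (metis lessThan_iff)
  then show "i = j"
    using inj_onD[OF bij_betw_imp_inj_on[OF bij_class_enum]] \<open>i \<in> {..<w}\<close> \<open>j \<in> {..<w}\<close> by blast
qed

lemma W_nonzero: "W \<noteq> 0"
proof (rule det_dilation_matrix_nonzero[OF generator_nonzero[OF generator] part_class_enum_nonzero])
  have "degree (part (class_enum i)) < n" if "i < w" for i
    using degree_part_le[of "class_enum i"] class_enum_in_support_classes[OF that] l_le n_pos
    by (simp add: support_classes_def n_def)
  then show "inj_on (\<lambda>i. \<omega> ^ degree (part (class_enum i))) {..<w}"
    using inj_on_degree_part_class_enum inj_on_generator_pow[OF generator]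
    unfolding inj_on_def n_def by auto
qed

lemma degree_W_le: "degree W \<le> (l - 1) * w"
  using degree_part_le class_enum_in_support_classes
  by (intro degree_det_dilation_matrix_le) (auto simp: support_classes_def)

lemma poly_f_zero_shift:
  assumes "t \<in> zero_shifts b" and "j < s"
  shows "poly f (\<zeta> ^ t * \<omega> ^ (s * b + j)) = 0"
proof -
  have "poly f (\<omega> ^ (s * ((b + t * shift) mod blocks) + j)) = 0"
    using assms by (simp add: zero_shifts_def zero_block_def)
  then show ?thesis
    by (simp add: omega_pow_shifted_block)
qed

lemma zero_shifts_subset: "zero_shifts b \<subseteq> {..<r}"
  by (auto simp: zero_shifts_def)

lemma finite_zero_shifts: "finite (zero_shifts b)"
  using zero_shifts_subset by (rule finite_subset) simp

lemma part_vanishes_if_all_shifts_zero: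
  assumes "zero_shifts b = {..<r}" and "j < s" and "a < r"
  shows "poly (part a) (\<omega> ^ (s * b + j)) = 0"
proof -
  let ?x = "\<omega> ^ (s * b + j)"
  have zeros: "poly (coset_poly r f ?x) (\<zeta> ^ t) = 0" if "t < r" for t
    using poly_f_zero_shift[of t b j] assms(1,2) that
    by (simp add: poly_coset_poly[OF zeta_pow_root_of_unity r_pos])
  have "coset_poly r f ?x = 0"
  proof (rule ccontr)
    assume "coset_poly r f ?x \<noteq> 0"
    then have "card {..<r} < poly_sparsity (coset_poly r f ?x)"
      using zeros by (intro card_zeros_less_sparsity degree_coset_poly_less[OF r_pos]) auto
    moreover have "poly_sparsity (coset_poly r f ?x) \<le> card {..<r}"
      unfolding poly_sparsity_def by (intro card_mono) (auto simp: coeff_coset_poly split: if_splits)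
    ultimately show False
      by simp
  qed
  then show ?thesis
    using coeff_coset_poly[of r f ?x a] assms(3) by simp
qed

lemma card_zero_shifts_le:
  assumes "zero_shifts b \<noteq> {..<r}"
  shows "card (zero_shifts b) \<le> w"
proof -
  obtain t\<^sub>0 where "t\<^sub>0 < r" and "t\<^sub>0 \<notin> zero_shifts b"
    using assms zero_shifts_subset by blast
  then obtain j where "j < s" and nonzero: "poly f (\<zeta> ^ t\<^sub>0 * \<omega> ^ (s * b + j)) \<noteq> 0"
    using omega_pow_shifted_block by (auto simp: zero_shifts_def zero_block_def)
  let ?x = "\<omega> ^ (s * b + j)"
  have poly_coset: "poly (coset_poly r f ?x) (\<zeta> ^ t) = poly f (\<zeta> ^ t * ?x)" for t
    by (rule poly_coset_poly[OF zeta_pow_root_of_unity r_pos])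
  then have "coset_poly r f ?x \<noteq> 0"
    using nonzero by force
  then have "card (zero_shifts b) < poly_sparsity (coset_poly r f ?x)"
    using poly_coset poly_f_zero_shift \<open>j < s\<close>
    by (intro card_zeros_less_sparsity degree_coset_poly_less[OF r_pos] zero_shifts_subset) auto
  also have "\<dots> \<le> card {a. a < r \<and> poly (part a) ?x \<noteq> 0}"
    by (rule poly_sparsity_coset_poly_le)
  also have "\<dots> \<le> card (insert 1 support_classes)"
    using finite_support_classes by (intro card_mono) (auto simp: support_classes_def)
  also have "\<dots> \<le> w + 1"
    using finite_support_classes by (simp add: w_def card_insert_if)
  finally show ?thesis
    by simp
qed

lemma sum_shift_relation_eq_0:
  assumes "j < s"
  shows "(\<Sum>a<r. (\<Sum>t\<in>zero_shifts b. \<zeta> ^ (t * a) * \<mu> t) * poly (part a) (\<omega> ^ (s * b + j))) = 0"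
proof -
  let ?x = "\<omega> ^ (s * b + j)"
  have "(\<Sum>a<r. (\<Sum>t\<in>zero_shifts b. \<zeta> ^ (t * a) * \<mu> t) * poly (part a) ?x) =
      (\<Sum>t\<in>zero_shifts b. \<mu> t * (\<Sum>a<r. (\<zeta> ^ t) ^ a * poly (part a) ?x))"
    by (simp add: sum_distrib_left sum_distrib_right sum.swap[of _ "zero_shifts b"]
        power_mult[symmetric] mult_ac)
  also have "\<dots> = (\<Sum>t\<in>zero_shifts b. \<mu> t * poly f (\<zeta> ^ t * ?x))"
    by (simp add: poly_mult_root_of_unity[OF zeta_pow_root_of_unity r_pos])
  also have "\<dots> = 0"
    using poly_f_zero_shift assms by simp
  finally show ?thesis .
qed

definition block_relation :: "nat \<Rightarrow> (nat \<Rightarrow> 'a) \<Rightarrow> bool" where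
  "block_relation b \<rho> \<longleftrightarrow> (\<forall>j<s. (\<Sum>a\<in>support_classes. \<rho> a * poly (part a) (\<omega> ^ (s * b + j))) = 0)"

lemma card_le_order_W:
  assumes P: "P \<subseteq> support_classes"
    and piv: "\<And>a. a \<in> P \<Longrightarrow> \<rho> a a \<noteq> 0"
    and off: "\<And>a a'. a \<in> P \<Longrightarrow> a' \<in> P \<Longrightarrow> a' \<noteq> a \<Longrightarrow> \<rho> a a' = 0"
    and rel: "\<And>a. a \<in> P \<Longrightarrow> block_relation b (\<rho> a)"
    and "e + w \<le> s"
  shows "card P \<le> order (\<omega> ^ (s * b + e)) W"
proof -
  define I where "I = {i. i < w \<and> class_enum i \<in> P}"
  have bij_I: "bij_betw class_enum I P"
    using bij_betw_subset[OF bij_class_enum, of I] P bij_betw_imp_surj_on[OF bij_class_enum]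
    by (auto simp: I_def bij_betw_def)
  have inj_I: "inj_on class_enum I"
    using bij_I by (rule bij_betw_imp_inj_on)
  have "card I \<le> order (\<omega> ^ (s * b + e)) W"
  proof (rule card_le_order_det[where v = "\<lambda>i k. \<rho> (class_enum i) (class_enum k)"])
    show "dilation_matrix \<omega> w (\<lambda>i. part (class_enum i)) \<in> carrier_mat w w"
      by (rule dilation_matrix_carrier)
    show "W \<noteq> 0"
      by (rule W_nonzero)
    show "I \<subseteq> {..<w}"
      by (auto simp: I_def)
    show "\<rho> (class_enum i) (class_enum i) \<noteq> 0" if "i \<in> I" for i
      using that piv by (simp add: I_def)
    show "\<rho> (class_enum i) (class_enum k) = 0" if "i \<in> I" "k \<in> I" "k \<noteq> i" for i k
      using that off inj_onD[OF inj_I] by (auto simp: I_def)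
    fix i j assume "i \<in> I" and "j < w"
    let ?y = "\<omega> ^ (s * b + (e + j))"
    have "\<omega> ^ j * \<omega> ^ (s * b + e) = ?y"
      by (simp add: power_add mult_ac)
    moreover have "(\<Sum>k<w. \<rho> (class_enum i) (class_enum k) * poly (part (class_enum k)) ?y) =
        (\<Sum>a'\<in>support_classes. \<rho> (class_enum i) a' * poly (part a') ?y)"
      by (rule sum.reindex_bij_betw[OF bij_class_enum])
    moreover have "(\<Sum>a'\<in>support_classes. \<rho> (class_enum i) a' * poly (part a') ?y) = 0"
      using rel \<open>i \<in> I\<close> \<open>j < w\<close> \<open>e + w \<le> s\<close> by (simp add: I_def block_relation_def)
    ultimately show "(\<Sum>k<w. \<rho> (class_enum i) (class_enum k) *
        poly (dilation_matrix \<omega> w (\<lambda>i. part (class_enum i)) $$ (k, j)) (\<omega> ^ (s * b + e))) = 0"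
      using \<open>j < w\<close> by (simp add: poly_dilation_matrix)
  qed
  then show ?thesis
    using bij_betw_same_card[OF bij_I] by simp
qed

lemma exists_relation_vanishing_except:
  assumes P: "P \<subseteq> support_classes" and card_P: "card (zero_shifts b) = card P + 1"
    and "a \<in> P"
  obtains \<rho> where "\<rho> a \<noteq> 0" and "\<forall>a'\<in>P - {a}. \<rho> a' = 0" and "block_relation b \<rho>"
proof -
  let ?E = "insert 1 (P - {a})"
  have fin_P: "finite P"
    using P finite_support_classes by (rule finite_subset)
  have "1 \<notin> P" "P \<subseteq> {..<r}"
    using P by (auto simp: support_classes_def)
  moreover have "0 < card P"
    using fin_P \<open>a \<in> P\<close> by (auto simp: card_gt_0_iff)
  ultimately have E: "?E \<subseteq> {..<r}" "a < r" "a \<notin> ?E" "card (zero_shifts b) = card ?E + 1"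
    using card_P fin_P \<open>a \<in> P\<close> r_ge_3 by (auto simp: card_Diff_singleton)
  obtain \<mu> where van: "\<forall>e\<in>?E. (\<Sum>t\<in>zero_shifts b. \<zeta> ^ (t * e) * \<mu> t) = 0"
    and nonzero: "(\<Sum>t\<in>zero_shifts b. \<zeta> ^ (t * a) * \<mu> t) \<noteq> 0"
    by (rule exists_transform_vanishing_except[OF zero_shifts_subset E])
  let ?\<rho> = "\<lambda>a'. \<Sum>t\<in>zero_shifts b. \<zeta> ^ (t * a') * \<mu> t"
  show ?thesis
  proof (rule that[of ?\<rho>])
    show "?\<rho> a \<noteq> 0" "\<forall>a'\<in>P - {a}. ?\<rho> a' = 0"
      using nonzero van by auto
    show "block_relation b ?\<rho>"
      unfolding block_relation_def
    proof (intro allI impI)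
      fix j assume "j < s"
      have "\<forall>a'\<in>{..<r} - support_classes. ?\<rho> a' * poly (part a') (\<omega> ^ (s * b + j)) = 0"
        using van by (auto simp: support_classes_def)
      then have "(\<Sum>a'\<in>support_classes. ?\<rho> a' * poly (part a') (\<omega> ^ (s * b + j))) =
          (\<Sum>a'<r. ?\<rho> a' * poly (part a') (\<omega> ^ (s * b + j)))"
        using support_classes_subset by (intro sum.mono_neutral_left) auto
      also have "\<dots> = 0"
        using \<open>j < s\<close> by (rule sum_shift_relation_eq_0)
      finally show "(\<Sum>a'\<in>support_classes. ?\<rho> a' * poly (part a') (\<omega> ^ (s * b + j))) = 0" .
    qed
  qed
qed

definition mult_bound :: "nat \<Rightarrow> nat" where
  "mult_bound b = (if zero_shifts b = {..<r} then w else card (zero_shifts b) - 1)"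

lemma mult_bound_le_order_W:
  assumes "e + w \<le> s"
  shows "mult_bound b \<le> order (\<omega> ^ (s * b + e)) W"
proof (cases "zero_shifts b = {..<r}")
  case True
  have "card support_classes \<le> order (\<omega> ^ (s * b + e)) W"
  proof (rule card_le_order_W[where \<rho> = "\<lambda>a a'. of_bool (a' = a)"])
    fix a assume "a \<in> support_classes"
    then show "block_relation b (\<lambda>a'. of_bool (a' = a))"
      using part_vanishes_if_all_shifts_zero[OF True] finite_support_classes
      by (simp add: block_relation_def support_classes_def if_distrib[of "\<lambda>c. c * _"] cong: if_cong)
  qed (use assms in auto)
  then show ?thesis
    using True by (simp add: mult_bound_def w_def)
next
  case False
  show ?thesis
  proof (cases "zero_shifts b = {}")
    case nonempty: False
    have "card (zero_shifts b) - 1 \<le> card support_classes"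
      using card_zero_shifts_le[OF False] by (simp add: w_def)
    then obtain P where P: "P \<subseteq> support_classes" "card P = card (zero_shifts b) - 1"
      by (rule obtain_subset_with_card_n)
    have card_P: "card (zero_shifts b) = card P + 1"
      using P(2) nonempty finite_zero_shifts by (simp add: card_gt_0_iff)
    have "\<forall>a\<in>P. \<exists>\<rho>. \<rho> a \<noteq> 0 \<and> (\<forall>a'\<in>P - {a}. \<rho> a' = 0) \<and> block_relation b \<rho>"
      by (blast intro: exists_relation_vanishing_except[OF P(1) card_P])
    from bchoice[OF this] obtain \<rho> where
      \<rho>: "\<forall>a\<in>P. \<rho> a a \<noteq> 0 \<and> (\<forall>a'\<in>P - {a}. \<rho> a a' = 0) \<and> block_relation b (\<rho> a)"
      by blast
    have "card P \<le> order (\<omega> ^ (s * b + e)) W"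
      by (rule card_le_order_W[OF P(1), of \<rho>]) (use \<rho> assms in auto)
    then show ?thesis
      using False P(2) by (simp add: mult_bound_def)
  qed (use False in \<open>simp add: mult_bound_def\<close>)
qed

lemma inj_on_block_points: "inj_on (\<lambda>(b, e). \<omega> ^ (s * b + e)) ({..<blocks} \<times> {..<s})"
proof (rule inj_onI, clarsimp)
  fix b e b' e'
  assume b: "b < blocks" "e < s" "b' < blocks" "e' < s" and eq: "\<omega> ^ (s * b + e) = \<omega> ^ (s * b' + e')"
  have "s * b + e < n" if "b < blocks" "e < s" for b e
  proof -
    have "s * b + e < s * (b + 1)"
      using that by simp
    also have "\<dots> \<le> s * blocks"
      using that by (intro mult_le_mono2) simp
    finally show ?thesis
      by (simp add: s_times_blocks)
  qed
  then have "s * b + e = s * b' + e'"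
    using eq b inj_on_generator_pow[OF generator] by (auto simp: inj_on_def n_def)
  then have "(s * b + e) div s = (s * b' + e') div s" and "(s * b + e) mod s = (s * b' + e') mod s"
    by simp_all
  then show "b = b' \<and> e = e'"
    using b by simp
qed

lemma sum_mult_bound_le: "(s - w + 1) * (\<Sum>b<blocks. mult_bound b) \<le> (l - 1) * w"
proof -
  have w_le_s: "w \<le> s"
    using w_le r_le_s by simp
  define X where "X = {..<blocks} \<times> {..s - w}"
  define pt where "pt = (\<lambda>(b, e). \<omega> ^ (s * b + e))"
  have "inj_on pt X"
    unfolding pt_def using w_pos w_le_s
    by (intro inj_on_subset[OF inj_on_block_points]) (auto simp: X_def)
  have "(s - w + 1) * (\<Sum>b<blocks. mult_bound b) = (\<Sum>b<blocks. \<Sum>e\<le>s - w. mult_bound b)"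
    by (simp add: sum_distrib_left)
  also have "\<dots> = (\<Sum>(b, e)\<in>X. mult_bound b)"
    by (simp only: X_def sum.cartesian_product)
  also have "\<dots> \<le> (\<Sum>x\<in>X. order (pt x) W)"
    using mult_bound_le_order_W w_le_s by (intro sum_mono) (auto simp: X_def pt_def)
  also have "\<dots> = (\<Sum>y\<in>pt ` X. order y W)"
    by (simp add: sum.reindex[OF \<open>inj_on pt X\<close>])
  also have "\<dots> \<le> degree W"
    using W_nonzero by (rule sum_order_le_degree_on) (simp add: X_def)
  also have "\<dots> \<le> (l - 1) * w"
    by (rule degree_W_le)
  finally show ?thesis .
qed

lemma card_zero_shifts_le_mult_bound: "w * card (zero_shifts b) \<le> w + (r - 1) * mult_bound b"
proof (cases "zero_shifts b = {..<r}")
  case True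
  then show ?thesis
    using r_pos by (simp add: mult_bound_def algebra_simps)
next
  case False
  have "w * card (zero_shifts b) \<le> w + w * (card (zero_shifts b) - 1)"
    by (cases "card (zero_shifts b)") simp_all
  also have "\<dots> \<le> w + (r - 1) * (card (zero_shifts b) - 1)"
    using w_le by (intro add_left_mono mult_le_mono1) linarith
  finally show ?thesis
    using False by (simp add: mult_bound_def)
qed

lemma sum_card_zero_shifts:
  "(\<Sum>b<blocks. card (zero_shifts b)) = r * card {b. b < blocks \<and> zero_block b}"
proof -
  have "(\<Sum>b<blocks. card (zero_shifts b)) =
      (\<Sum>b<blocks. \<Sum>t<r. of_bool (zero_block ((b + t * shift) mod blocks)) :: nat)"
    by (simp add: zero_shifts_def Collect_conj_eq lessThan_def)
  also have "\<dots> = (\<Sum>t<r. \<Sum>b<blocks. of_bool (zero_block ((b + t * shift) mod blocks)))"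
    by (rule sum.swap)
  also have "\<dots> = (\<Sum>t<r. \<Sum>b<blocks. of_bool (zero_block b))"
  proof (rule sum.cong[OF refl])
    fix t
    show "(\<Sum>b<blocks. of_bool (zero_block ((b + t * shift) mod blocks))) =
        (\<Sum>b<blocks. of_bool (zero_block b) :: nat)"
      by (rule sum.reindex_bij_betw[OF bij_betw_add_mod[OF blocks_pos]])
  qed
  also have "\<dots> = r * card {b. b < blocks \<and> zero_block b}"
    by (simp add: Collect_conj_eq lessThan_def)
  finally show ?thesis .
qed

lemma folded_weight_ev: "folded_weight \<omega> s (ev f) = blocks - card {b. b < blocks \<and> zero_block b}"
proof -
  have "{i. i < (CARD('a) - 1) div s \<and> (\<exists>j<s. ev f (\<omega> ^ (s * i + j)) \<noteq> 0)} =
      {..<blocks} - {b. b < blocks \<and> zero_block b}"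
    using generator_nonzero[OF generator] by (auto simp: blocks_def n_def zero_block_def ev_def)
  then show ?thesis
    by (simp add: folded_weight_def) (subst card_Diff_subset, auto)
qed

lemma card_zero_blocks_le:
  "w * (r * card {b. b < blocks \<and> zero_block b}) \<le> w * blocks + (r - 1) * (\<Sum>b<blocks. mult_bound b)"
proof -
  have "w * (r * card {b. b < blocks \<and> zero_block b}) = (\<Sum>b<blocks. w * card (zero_shifts b))"
    by (simp add: sum_card_zero_shifts[symmetric] sum_distrib_left)
  also have "\<dots> \<le> (\<Sum>b<blocks. w + (r - 1) * mult_bound b)"
    by (intro sum_mono card_zero_shifts_le_mult_bound)
  finally show ?thesis
    by (simp add: sum.distrib sum_distrib_left mult.commute)
qed

lemma card_zero_blocks_real_bound:
  assumes "1 \<le> l"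
  shows "real r * real (card {b. b < blocks \<and> zero_block b})
    \<le> real blocks + (real r - 1) * (real l - 1) / (real s + 1 - real r)"
proof (rule zero_blocks_bound_arith[where w = "real w" and D = "real (\<Sum>b<blocks. mult_bound b)"])
  have "real (w * (r * card {b. b < blocks \<and> zero_block b}))
      \<le> real (w * blocks + (r - 1) * (\<Sum>b<blocks. mult_bound b))"
    using card_zero_blocks_le by (simp only: of_nat_le_iff)
  then show "real w * (real r * real (card {b. b < blocks \<and> zero_block b}))
      \<le> real w * real blocks + (real r - 1) * real (\<Sum>b<blocks. mult_bound b)"
    using r_pos by (simp add: of_nat_diff)
  have "real (s - w + 1) * real (\<Sum>b<blocks. mult_bound b) \<le> real (l - 1) * real w"
    using sum_mult_bound_le by (simp only: of_nat_mult[symmetric] of_nat_le_iff)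
  moreover have "real (s - w + 1) = real s - real w + 1" and "real (l - 1) = real l - 1"
    using w_le r_le_s assms by (simp_all add: of_nat_diff)
  ultimately show "(real s - real w + 1) * real (\<Sum>b<blocks. mult_bound b) \<le> (real l - 1) * real w"
    by metis
qed (use w_pos w_le r_le_s assms in auto)

lemma folded_weight_ev_ge:
  assumes s: "2 * r ^ 2 \<le> s" and "1 \<le> l"
  shows "real n / real s * (1 - (real l - 1) / real n
      - (1 + real r ^ 2 / real s) * sqrt (1 / real r * (1 - (real l - 1) / real n)))
    \<le> real (folded_weight \<omega> s (ev f))"
proof -
  define \<delta> where "\<delta> = 1 - (real l - 1) / real n"
  define Z where "Z = card {b. b < blocks \<and> zero_block b}"
  have n: "real n = real s * real blocks"
    using s_times_blocks by (metis of_nat_mult)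
  have "Z \<le> blocks"
    unfolding Z_def by (rule card_mono[of "{..<blocks}", simplified]) auto
  have \<delta>: "0 \<le> \<delta>" "\<delta> \<le> 1"
    using \<open>1 \<le> l\<close> l_le n_pos by (auto simp: \<delta>_def n_def field_simps)
  have "real l - 1 = (1 - \<delta>) * real n"
    using n_pos by (simp add: \<delta>_def)
  then have "real l - 1 = (1 - \<delta>) * real s * real blocks"
    by (simp add: n)
  then have zeros: "real r * real Z \<le> real blocks + (real r - 1) * ((1 - \<delta>) * real s * real blocks) / (real s + 1 - real r)"
    using card_zero_blocks_real_bound[OF \<open>1 \<le> l\<close>] by (simp add: Z_def)
  have "real n / real s * (1 - (real l - 1) / real n
      - (1 + real r ^ 2 / real s) * sqrt (1 / real r * (1 - (real l - 1) / real n)))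
    = real blocks * (\<delta> - (1 + real r ^ 2 / real s) * sqrt (\<delta> / real r))"
    using n s_pos by (simp add: \<delta>_def)
  also have "\<dots> \<le> real blocks - real Z"
  proof (rule folded_distance_arith[OF _ _ _ \<delta> _ zeros])
    show "2 * real r ^ 2 \<le> real s"
      using s by (metis of_nat_le_iff of_nat_mult of_nat_numeral of_nat_power)
  qed (use r_pos blocks_pos \<open>Z \<le> blocks\<close> in auto)
  also have "\<dots> = real (folded_weight \<omega> s (ev f))"
    using \<open>Z \<le> blocks\<close> by (simp add: folded_weight_ev Z_def of_nat_diff)
  finally show ?thesis .
qed

end

theorem corollary6p4:
  fixes \<omega> :: "'a::{finite,field}" and q r l s :: nat
  assumes "q = card (UNIV :: 'a set)"
    and "prime r" and "r dvd (q - 1)" and "r \<ge> 3"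
    and "real q / 2 \<le> real l" and "l \<le> q - 1"
    and "s dvd (q - 1) div r"
    and sparse: "\<And>f :: 'a poly. f \<noteq> 0 \<Longrightarrow> degree f < r \<Longrightarrow>
        poly_sparsity f + card {x. x \<noteq> 0 \<and> x ^ r = 1 \<and> poly f x \<noteq> 0} \<ge> r + 1"
    and "s \<ge> 2 * r ^ 2"
    and "is_generator \<omega>"
  shows "\<forall>c \<in> tb_code r l - dual_code (tb_code r l :: ('a \<Rightarrow> 'a) set).
     real (folded_weight \<omega> s c) \<ge>
       (real q - 1) / real s *
        (1 - (real l - 1) / (real q - 1)
           - (1 + real r ^ 2 / real s) * sqrt (1 / real r * (1 - (real l - 1) / (real q - 1))))"
proof
  fix c :: "'a \<Rightarrow> 'a"
  assume c: "c \<in> tb_code r l - dual_code (tb_code r l)"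
  then obtain f :: "'a poly" where c_eq: "c = ev f"
    and coeffs: "\<And>i. coeff f i \<noteq> 0 \<Longrightarrow> i \<in> tb_index_set CARD('a) r l"
    unfolding tb_code_def by blast
  interpret tamo_barg \<omega> r
    using assms by unfold_locales auto
  have "1 \<le> l"
    using assms(1,5) one_less_card_field[where 'a = 'a] by linarith
  have "r \<le> s"
    using \<open>s \<ge> 2 * r ^ 2\<close> self_le_power[of r 2] r_pos by simp
  interpret tamo_barg_codeword \<omega> r s l f
    using assms coeffs exists_residue_part_if_not_dual[of f l] c \<open>r \<le> s\<close>
    by unfold_locales (auto simp: c_eq)
  show "real (folded_weight \<omega> s c) \<ge> (real q - 1) / real s * (1 - (real l - 1) / (real q - 1)
      - (1 + real r ^ 2 / real s) * sqrt (1 / real r * (1 - (real l - 1) / (real q - 1))))"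
    using folded_weight_ev_ge[OF \<open>s \<ge> 2 * r ^ 2\<close> \<open>1 \<le> l\<close>] assms(1) n_pos
    by (simp add: c_eq n_def of_nat_diff)
qed

end
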